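(* Let $G=(V,E)$ be a (finite or infinite) graph satisfying the $CDE(n,-K)$ condition for some $n>0$, $K>0$. Fix $R>0$ and $x_0\in V$, and let $u$ be a positive solution of the heat equation $\partial_t u=\Delta u$ on the ball $B(x_0,2R)$. Then for every $x\in B(x_0,R)$ and every $t>0$, $$\frac{\Gamma(\sqrt{u})}{u}-\frac{\partial_{t}(\sqrt{u})}{\sqrt{u}}\leq \frac{n}{2t}+\sqrt{\tfrac{1}{2}nKD_{\mu}(D_{w}+1)}+\frac{nD_{\mu}(1+D_{w})}{R}.$$
   Context: Graphs: $G=(V,E)$ is a connected, locally finite graph; each edge $xy$ carries a weight $w_{xy}>0$ (possibly $w_{xy}\neq w_{yx}$), and $\mu:V\to(0,\infty)$ is a vertex measure. Write $y\sim x$ if $xy\in E$, $\deg(x)=\sum_{y\sim x}w_{xy}<\infty$, $D_\mu=\sup_{x\in V}\deg(x)/\mu(x)$, $D_w=\sup_{x\sim y}\deg(x)/w_{xy}$. $d$ is the combinatorial graph distance and $B(x_0,r)=\{v\in V: d(v,x_0)\le r\}$. The Laplacian is $\Delta f(x)=\frac{1}{\mu(x)}\sum_{y\sim x}w_{xy}(f(y)-f(x))$. The gradient forms are $2\Gamma(f,g)=\Delta(fg)-f\Delta g-g\Delta f$, $2\Gamma_2(f,g)=\Delta\Gamma(f,g)-\Gamma(f,\Delta g)-\Gamma(\Delta f,g)$, $\Gamma(f)=\Gamma(f,f)$, $\Gamma_2(f)=\Gamma_2(f,f)$. The graph satisfies $CDE(n,K)$ ($n>0$, $K\in\mathbb R$)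 if for every $f:V\to(0,\infty)$ and every vertex, $\widetilde\Gamma_2(f)\ge\frac1n(\Delta f)^2+K\Gamma(f)$, where $\widetilde\Gamma_2(f)=\Gamma_2(f)-\Gamma\big(f,\frac{\Gamma(f)}{f}\big)$. A positive solution of the heat equation on a set $U\subset V$ is a function $u:V\times[0,\infty)\to(0,\infty)$, continuously differentiable in $t$, with $\partial_t u(x,t)=\Delta u(\cdot,t)(x)$ for all $x\in U$, $t\ge 0$; here $\sqrt u$, $\Gamma(\sqrt u)$ etc. are taken at each fixed time. *)

theory Defs
  imports "HOL-Analysis.Analysis"
begin

text \<open>Weighted graphs: vertex set = UNIV of type 'a, edge relation E (undirected: symmetric),
  edge weights w x y (possibly w x y \<noteq> w y x), vertex measure mu.\<close>

definition nbrs :: "('a \<Rightarrow> 'a \<Rightarrow> bool) \<Rightarrow> 'a \<Rightarrow> 'a set" where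
  "nbrs E x = {y. E x y}"

definition weighted_graph ::
  "('a \<Rightarrow> 'a \<Rightarrow> bool) \<Rightarrow> ('a \<Rightarrow> 'a \<Rightarrow> real) \<Rightarrow> ('a \<Rightarrow> real) \<Rightarrow> bool" where
  "weighted_graph E w mu \<longleftrightarrow>
     (\<forall>x y. E x y \<longrightarrow> E y x) \<and>
     (\<forall>x. \<not> E x x) \<and>
     (\<forall>x y. E\<^sup>*\<^sup>* x y) \<and>
     (\<forall>x. finite (nbrs E x)) \<and>
     (\<forall>x y. E x y \<longrightarrow> w x y > 0) \<and>
     (\<forall>x. mu x > 0)"

definition deg :: "('a \<Rightarrow> 'a \<Rightarrow> bool) \<Rightarrow> ('a \<Rightarrow> 'a \<Rightarrow> real) \<Rightarrow> 'a \<Rightarrow> real" where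
  "deg E w x = (\<Sum>y\<in>nbrs E x. w x y)"

definition D_mu :: "('a \<Rightarrow> 'a \<Rightarrow> bool) \<Rightarrow> ('a \<Rightarrow> 'a \<Rightarrow> real) \<Rightarrow> ('a \<Rightarrow> real) \<Rightarrow> real" where
  "D_mu E w mu = (SUP x. deg E w x / mu x)"

definition D_w :: "('a \<Rightarrow> 'a \<Rightarrow> bool) \<Rightarrow> ('a \<Rightarrow> 'a \<Rightarrow> real) \<Rightarrow> real" where
  "D_w E w = (SUP p\<in>{(x, y). E x y}. deg E w (fst p) / w (fst p) (snd p))"

definition Lap :: "('a \<Rightarrow> 'a \<Rightarrow> bool) \<Rightarrow> ('a \<Rightarrow> 'a \<Rightarrow> real) \<Rightarrow> ('a \<Rightarrow> real)
    \<Rightarrow> ('a \<Rightarrow> real) \<Rightarrow> 'a \<Rightarrow> real" where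
  "Lap E w mu f x = (\<Sum>y\<in>nbrs E x. w x y * (f y - f x)) / mu x"

definition Gam :: "('a \<Rightarrow> 'a \<Rightarrow> bool) \<Rightarrow> ('a \<Rightarrow> 'a \<Rightarrow> real) \<Rightarrow> ('a \<Rightarrow> real)
    \<Rightarrow> ('a \<Rightarrow> real) \<Rightarrow> ('a \<Rightarrow> real) \<Rightarrow> 'a \<Rightarrow> real" where
  "Gam E w mu f g x =
     (Lap E w mu (\<lambda>y. f y * g y) x - f x * Lap E w mu g x - g x * Lap E w mu f x) / 2"

definition Gam2 :: "('a \<Rightarrow> 'a \<Rightarrow> bool) \<Rightarrow> ('a \<Rightarrow> 'a \<Rightarrow> real) \<Rightarrow> ('a \<Rightarrow> real)
    \<Rightarrow> ('a \<Rightarrow> real) \<Rightarrow> ('a \<Rightarrow> real) \<Rightarrow> 'a \<Rightarrow> real" where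
  "Gam2 E w mu f g x =
     (Lap E w mu (Gam E w mu f g) x - Gam E w mu f (Lap E w mu g) x
        - Gam E w mu (Lap E w mu f) g x) / 2"

definition Gam2_tilde :: "('a \<Rightarrow> 'a \<Rightarrow> bool) \<Rightarrow> ('a \<Rightarrow> 'a \<Rightarrow> real) \<Rightarrow> ('a \<Rightarrow> real)
    \<Rightarrow> ('a \<Rightarrow> real) \<Rightarrow> 'a \<Rightarrow> real" where
  "Gam2_tilde E w mu f x =
     Gam2 E w mu f f x - Gam E w mu f (\<lambda>y. Gam E w mu f f y / f y) x"

definition CDE :: "('a \<Rightarrow> 'a \<Rightarrow> bool) \<Rightarrow> ('a \<Rightarrow> 'a \<Rightarrow> real) \<Rightarrow> ('a \<Rightarrow> real)
    \<Rightarrow> real \<Rightarrow> real \<Rightarrow> bool" where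
  "CDE E w mu n K \<longleftrightarrow>
     (\<forall>f. (\<forall>x. f x > 0) \<longrightarrow>
        (\<forall>x. Gam2_tilde E w mu f x \<ge> (Lap E w mu f x)\<^sup>2 / n + K * Gam E w mu f f x))"

definition gdist :: "('a \<Rightarrow> 'a \<Rightarrow> bool) \<Rightarrow> 'a \<Rightarrow> 'a \<Rightarrow> nat" where
  "gdist E x y = (LEAST k. (E ^^ k) x y)"

definition gball :: "('a \<Rightarrow> 'a \<Rightarrow> bool) \<Rightarrow> 'a \<Rightarrow> real \<Rightarrow> 'a set" where
  "gball E x0 r = {v. real (gdist E v x0) \<le> r}"

end

theory Submission
  imports Defs
begin

text \<open>With \<open>f = \<surd>u\<close>, the heat equation turns the left-hand side into
  \<open>h = -\<Delta>f/f\<close>, and trivially \<open>h \<le> deg/\<mu> \<le> D\<^sub>\<mu>\<close>. For the real bound apply a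
  maximum principle to \<open>s \<phi> h\<close> on \<open>V \<times> [0,t]\<close>, where the cutoff \<open>\<phi>\<close> is \<open>1\<close> on
  \<open>B(x\<^sub>0,R)\<close>, vanishes outside \<open>B(x\<^sub>0,2R)\<close> and is \<open>1/R\<close>-Lipschitz. At a maximum
  point the time derivative is nonnegative, while \<open>CDE(n,-K)\<close> applied to \<open>f\<close> bounds
  \<open>\<partial>\<^sub>t h\<close> by a weighted Laplacian of \<open>h\<close> minus \<open>2h\<^sup>2/n\<close> plus \<open>K D\<^sub>\<mu>(1+D\<^sub>w)\<close>. Spatial
  maximality together with the Lipschitz bound on \<open>\<phi>\<close> bounds \<open>\<phi>\<^sup>2\<close> times that
  Laplacian by \<open>D\<^sub>\<mu>(1+D\<^sub>w)(\<phi>h + D\<^sub>\<mu>/R)/R\<close>, which leaves a quadratic inequality for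
  the maximum. When
  \<open>n(1+D\<^sub>w) < 1\<close>, testing \<open>CDE(n,-K)\<close> on a function that is \<open>1\<close> at one vertex and
  \<open>1+\<epsilon>\<close> elsewhere gives \<open>D\<^sub>\<mu> \<le> n(D\<^sub>\<mu> + K/2)\<close>, and the trivial bound suffices.\<close>

section \<open>Calculus of the graph Laplacian\<close>

lemma Lap_cong:
  assumes "\<And>y. y \<in> nbrs E x \<Longrightarrow> f y = g y" and "f x = g x"
  shows "Lap E w mu f x = Lap E w mu g x"
  unfolding Lap_def using assms by (auto intro!: sum.cong arg_cong[where f="\<lambda>s. s / mu x"])

lemma Lap_add: "Lap E w mu (\<lambda>y. f y + g y) x = Lap E w mu f x + Lap E w mu g x"
proof -
  have "(\<Sum>y\<in>nbrs E x. w x y * (f y + g y - (f x + g x))) =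
        (\<Sum>y\<in>nbrs E x. w x y * (f y - f x)) + (\<Sum>y\<in>nbrs E x. w x y * (g y - g x))"
    by (simp add: sum.distrib[symmetric] algebra_simps)
  then show ?thesis unfolding Lap_def by (simp add: add_divide_distrib)
qed

lemma Lap_mult_self:
  "Lap E w mu (\<lambda>y. f y * f y) x = 2 * Gam E w mu f f x + 2 * f x * Lap E w mu f x"
  unfolding Gam_def by (simp add: field_simps)

lemma Gam_self_eq_sum: "Gam E w mu f f x = (\<Sum>y\<in>nbrs E x. w x y * (f y - f x)^2) / (2 * mu x)"
proof -
  have "(\<Sum>y\<in>nbrs E x. w x y * (f y * f y - f x * f x))
        - 2 * f x * (\<Sum>y\<in>nbrs E x. w x y * (f y - f x))
      = (\<Sum>y\<in>nbrs E x. w x y * (f y - f x)^2)"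
    by (simp add: sum_distrib_left sum_subtractf[symmetric] power2_eq_square algebra_simps)
  then show ?thesis unfolding Gam_def Lap_def
    by (simp add: diff_divide_distrib[symmetric] field_simps)
qed

lemma Gam2_tilde_expand:
  fixes E w mu
  assumes fnz: "\<And>y. f y \<noteq> 0"
  defines "L \<equiv> Lap E w mu" and "q \<equiv> \<lambda>y. Gam E w mu f f y / f y"
  shows "2 * Gam2_tilde E w mu f x =
    - L (\<lambda>y. f y * L f y) x + f x * L (L f) x + (L f x)^2 + f x * L q x + q x * L f x"
proof -
  have Gam_f_Lf:
    "Gam E w mu f (L f) x = (L (\<lambda>y. f y * L f y) x - f x * L (L f) x - L f x * L f x) / 2"
    unfolding Gam_def L_def by simp
  have Gam_Lf_f:
    "Gam E w mu (L f) f x = (L (\<lambda>y. f y * L f y) x - L f x * L f x - f x * L (L f) x) / 2"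
    unfolding Gam_def L_def by (simp add: mult.commute)
  have "L (\<lambda>y. f y * q y) x = L (Gam E w mu f f) x"
    unfolding L_def by (rule Lap_cong) (auto simp: q_def fnz)
  then have Gam_f_q: "Gam E w mu f q x = (L (Gam E w mu f f) x - f x * L q x - q x * L f x) / 2"
    unfolding Gam_def[of E w mu f q x] by (simp add: L_def)
  show ?thesis
    unfolding Gam2_tilde_def Gam2_def q_def[symmetric] L_def[symmetric] Gam_f_Lf Gam_Lf_f Gam_f_q
    by (simp add: power2_eq_square field_simps)
qed

definition lap_ratio :: "('a \<Rightarrow> 'a \<Rightarrow> bool) \<Rightarrow> ('a \<Rightarrow> 'a \<Rightarrow> real) \<Rightarrow> ('a \<Rightarrow> real)
    \<Rightarrow> ('a \<Rightarrow> real) \<Rightarrow> 'a \<Rightarrow> real" where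
  "lap_ratio E w mu f x = - Lap E w mu f x / f x"

text \<open>The Laplacian of the weighted graph with edge weights \<open>w x y f(y)\<^sup>2\<close> and vertex
  measure \<open>\<mu>(x) f(x)\<^sup>2\<close>.\<close>

definition Lap_weighted :: "('a \<Rightarrow> 'a \<Rightarrow> bool) \<Rightarrow> ('a \<Rightarrow> 'a \<Rightarrow> real) \<Rightarrow> ('a \<Rightarrow> real)
    \<Rightarrow> ('a \<Rightarrow> real) \<Rightarrow> ('a \<Rightarrow> real) \<Rightarrow> 'a \<Rightarrow> real" where
  "Lap_weighted E w mu f g x =
     (\<Sum>y\<in>nbrs E x. w x y * (f y)^2 * (g y - g x)) / (mu x * (f x)^2)"

lemma Gam_div_sq_sub_half_Lap:
  assumes "f x > 0"
  shows "Gam E w mu f f x / (f x * f x) - Lap E w mu (\<lambda>y. f y * f y) x / (2 * f x) / f x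
    = lap_ratio E w mu f x"
  using assms unfolding Lap_mult_self lap_ratio_def by (simp add: field_simps)

lemma Lap_weighted_lap_ratio:
  assumes fnz: "\<And>y. f y \<noteq> 0"
  shows "(f x)^2 * Lap_weighted E w mu f (lap_ratio E w mu f) x
    = - Lap E w mu (\<lambda>y. f y * Lap E w mu f y) x
      + (Lap E w mu f x / f x) * Lap E w mu (\<lambda>y. f y * f y) x"
proof -
  let ?g = "Lap E w mu f"
  have "(\<Sum>y\<in>nbrs E x. w x y * (f y)^2 * (lap_ratio E w mu f y - lap_ratio E w mu f x))
      = (\<Sum>y\<in>nbrs E x. - (w x y * (f y * ?g y - f x * ?g x))
          + ?g x / f x * (w x y * (f y * f y - f x * f x)))"
    using fnz by (intro sum.cong) (auto simp: lap_ratio_def field_simps power2_eq_square)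
  also have "\<dots> = - (\<Sum>y\<in>nbrs E x. w x y * (f y * ?g y - f x * ?g x))
      + ?g x / f x * (\<Sum>y\<in>nbrs E x. w x y * (f y * f y - f x * f x))"
    by (simp add: sum_subtractf sum_distrib_left sum_negf)
  moreover have "(f x)^2 * Lap_weighted E w mu f (lap_ratio E w mu f) x
      = (\<Sum>y\<in>nbrs E x. w x y * (f y)^2 * (lap_ratio E w mu f y - lap_ratio E w mu f x)) / mu x"
    unfolding Lap_weighted_def using fnz[of x] by (cases "mu x = 0") (simp_all add: field_simps)
  ultimately show ?thesis
    unfolding Lap_def[of E w mu "\<lambda>y. f y * ?g y"] Lap_def[of E w mu "\<lambda>y. f y * f y"]
    by (simp add: diff_divide_distrib add_divide_distrib)
qed

text \<open>If \<open>u\<close> solves the heat equation at \<open>x\<close> and its neighbours, then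
  \<open>p = \<Delta>f + \<Gamma>(f)/f\<close> is the time derivative of \<open>f = \<surd>u\<close> there.\<close>

lemma Gam2_tilde_eq_Lap_weighted:
  assumes fnz: "\<And>y. f y \<noteq> 0"
    and p_nbrs: "\<And>y. y \<in> nbrs E x \<Longrightarrow> p y = Lap E w mu f y + Gam E w mu f f y / f y"
    and p_x: "p x = Lap E w mu f x + Gam E w mu f f x / f x"
  shows "2 * Gam2_tilde E w mu f x = (f x)^2 * Lap_weighted E w mu f (lap_ratio E w mu f) x
    + f x * Lap E w mu p x - Lap E w mu f x * p x"
proof -
  let ?q = "\<lambda>y. Gam E w mu f f y / f y"
  have "Lap E w mu p x = Lap E w mu (\<lambda>y. Lap E w mu f y + ?q y) x"
    by (rule Lap_cong) (use p_nbrs p_x in auto)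
  then have Lap_p: "Lap E w mu p x = Lap E w mu (Lap E w mu f) x + Lap E w mu ?q x"
    by (simp add: Lap_add)
  have "(f x)^2 * Lap_weighted E w mu f (lap_ratio E w mu f) x
      = - Lap E w mu (\<lambda>y. f y * Lap E w mu f y) x
        + (Lap E w mu f x / f x) * (2 * Gam E w mu f f x + 2 * f x * Lap E w mu f x)"
    by (simp only: Lap_weighted_lap_ratio[where f=f, OF fnz] Lap_mult_self)
  also have "\<dots> = - Lap E w mu (\<lambda>y. f y * Lap E w mu f y) x
        + 2 * Lap E w mu f x * ?q x + 2 * (Lap E w mu f x)^2"
    using fnz[of x] by (simp add: field_simps power2_eq_square)
  finally have Lap_weighted_eq: "(f x)^2 * Lap_weighted E w mu f (lap_ratio E w mu f) x
      = - Lap E w mu (\<lambda>y. f y * Lap E w mu f y) x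
        + 2 * Lap E w mu f x * ?q x + 2 * (Lap E w mu f x)^2" .
  show ?thesis
    unfolding Gam2_tilde_expand[where f=f, OF fnz] Lap_weighted_eq Lap_p p_x
    by (simp add: algebra_simps power2_eq_square)
qed

lemma lap_ratio_time_deriv_le_of_CDE:
  assumes fpos: "\<And>y. f y > 0"
    and p_nbrs: "\<And>y. y \<in> nbrs E x \<Longrightarrow> p y = Lap E w mu f y + Gam E w mu f f y / f y"
    and p_x: "p x = Lap E w mu f x + Gam E w mu f f x / f x"
    and CDE: "CDE E w mu n (- K)"
  shows "- (Lap E w mu p x * f x - Lap E w mu f x * p x) / (f x)^2
    \<le> Lap_weighted E w mu f (lap_ratio E w mu f) x - (2 / n) * (lap_ratio E w mu f x)^2
       + 2 * K * Gam E w mu f f x / (f x)^2"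
proof -
  have fnz: "\<And>y. f y \<noteq> 0" using fpos by (metis less_irrefl)
  have fx: "(f x)^2 > 0" using fpos[of x] by simp
  have "(Lap E w mu f x)\<^sup>2 / n + (- K) * Gam E w mu f f x \<le> Gam2_tilde E w mu f x"
    using CDE fpos unfolding CDE_def by blast
  then have "2 * ((Lap E w mu f x)\<^sup>2 / n - K * Gam E w mu f f x) / (f x)^2
      \<le> 2 * Gam2_tilde E w mu f x / (f x)^2"
    using fx by (intro divide_right_mono) auto
  moreover have "2 * ((Lap E w mu f x)\<^sup>2 / n - K * Gam E w mu f f x) / (f x)^2
      = (2 / n) * (lap_ratio E w mu f x)^2 - 2 * K * Gam E w mu f f x / (f x)^2"
    using fpos[of x] unfolding lap_ratio_def by (simp add: field_simps power2_eq_square)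
  moreover have "2 * Gam2_tilde E w mu f x / (f x)^2
      = Lap_weighted E w mu f (lap_ratio E w mu f) x
        - (- (Lap E w mu p x * f x - Lap E w mu f x * p x) / (f x)^2)"
    using Gam2_tilde_eq_Lap_weighted[where f=f and p=p, OF fnz p_nbrs p_x] fpos[of x]
    by (simp add: field_simps)
  ultimately show ?thesis by linarith
qed

lemma Lap_eq_of_nbrs_affine:
  assumes "\<And>y. y \<in> nbrs E x \<Longrightarrow> g y = a + b * (w y x / mu y)"
  shows "Lap E w mu g x = a * (deg E w x / mu x)
     + b * ((\<Sum>y\<in>nbrs E x. w x y * (w y x / mu y)) / mu x) - g x * (deg E w x / mu x)"
proof -
  have "(\<Sum>y\<in>nbrs E x. w x y * (g y - g x))
      = (\<Sum>y\<in>nbrs E x. a * w x y + b * (w x y * (w y x / mu y)) - g x * w x y)"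
    by (rule sum.cong) (auto simp: assms algebra_simps)
  also have "\<dots> = a * deg E w x + b * (\<Sum>y\<in>nbrs E x. w x y * (w y x / mu y)) - g x * deg E w x"
    unfolding deg_def by (simp add: sum.distrib sum_subtractf sum_distrib_left)
  finally show ?thesis unfolding Lap_def by (simp add: diff_divide_distrib add_divide_distrib)
qed

locale wgraph =
  fixes E :: "'a \<Rightarrow> 'a \<Rightarrow> bool" and w :: "'a \<Rightarrow> 'a \<Rightarrow> real" and mu :: "'a \<Rightarrow> real"
  assumes weighted_graph: "weighted_graph E w mu"
begin

lemma sym: "E x y \<Longrightarrow> E y x"
  and irrefl: "\<not> E x x"
  and connected: "E\<^sup>*\<^sup>* x y"
  and finite_nbrs: "finite (nbrs E x)"
  and w_pos: "E x y \<Longrightarrow> w x y > 0"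
  and mu_pos: "mu x > 0"
  using weighted_graph unfolding weighted_graph_def by blast+

lemma w_pos_nbrs: "y \<in> nbrs E x \<Longrightarrow> w x y > 0"
  using w_pos unfolding nbrs_def by blast

lemma deg_nonneg: "deg E w x \<ge> 0"
  unfolding deg_def using w_pos_nbrs by (intro sum_nonneg) (auto intro: less_imp_le)

lemma w_le_deg: "E x y \<Longrightarrow> w x y \<le> deg E w x"
  unfolding deg_def using finite_nbrs w_pos_nbrs
  by (intro member_le_sum) (auto simp: nbrs_def intro: less_imp_le)

lemma lap_ratio_le_deg_div_mu:
  assumes fpos: "\<And>y. f y > 0"
  shows "lap_ratio E w mu f x \<le> deg E w x / mu x"
proof -
  have "(\<Sum>y\<in>nbrs E x. - (w x y * f x)) \<le> (\<Sum>y\<in>nbrs E x. w x y * (f y - f x))"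
    using w_pos_nbrs fpos by (intro sum_mono) (simp add: algebra_simps less_imp_le)
  then have "- (\<Sum>y\<in>nbrs E x. w x y * (f y - f x)) \<le> deg E w x * f x"
    unfolding deg_def by (simp add: sum_negf sum_distrib_right)
  then show ?thesis
    using mu_pos[of x] fpos[of x] unfolding lap_ratio_def Lap_def by (simp add: field_simps)
qed

text \<open>At the maximum point \<open>\<Delta>\<surd>u \<le> 0\<close>; this is what lets \<open>D\<^sub>w\<close> bound the values of
  \<open>\<surd>u\<close> at the neighbours.\<close>

lemma sum_w_le_deg_of_Lap_nonpos:
  assumes "Lap E w mu f x \<le> 0"
  shows "(\<Sum>y\<in>nbrs E x. w x y * f y) \<le> deg E w x * f x"
proof -
  have "(\<Sum>y\<in>nbrs E x. w x y * (f y - f x)) \<le> 0"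
    using assms mu_pos[of x] unfolding Lap_def by (simp add: divide_le_0_iff)
  then show ?thesis
    unfolding deg_def by (simp add: sum_subtractf sum_distrib_left algebra_simps)
qed

lemma nbr_le_of_Lap_nonpos:
  assumes fpos: "\<And>y. f y > 0" and Lap: "Lap E w mu f x \<le> 0" and y: "y \<in> nbrs E x"
  shows "f y \<le> (1 + deg E w x / w x y) * f x"
proof -
  have "w x y * f y \<le> (\<Sum>z\<in>nbrs E x. w x z * f z)"
    using finite_nbrs y w_pos_nbrs fpos
    by (intro member_le_sum) (auto intro: less_imp_le)
  also have "\<dots> \<le> deg E w x * f x" by (rule sum_w_le_deg_of_Lap_nonpos[OF Lap])
  finally have "f y \<le> deg E w x / w x y * f x"
    using w_pos_nbrs[OF y] by (simp add: field_simps)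
  then show ?thesis using fpos[of x] by (simp add: algebra_simps)
qed

lemma sum_w_sq_le_of_Lap_nonpos:
  assumes fpos: "\<And>y. f y > 0" and Lap: "Lap E w mu f x \<le> 0"
    and W: "\<And>y. y \<in> nbrs E x \<Longrightarrow> deg E w x / w x y \<le> W" and W1: "W \<ge> 1"
  shows "(\<Sum>y\<in>nbrs E x. w x y * (f y)^2) \<le> (1 + W) * deg E w x * (f x)^2"
    and "(\<Sum>y\<in>nbrs E x. w x y * (f y - f x)^2) \<le> W * deg E w x * (f x)^2"
proof -
  have sq: "w x y * (f y * f y) \<le> w x y * ((1 + W) * f x * f y)" if y: "y \<in> nbrs E x" for y
  proof -
    have "(1 + deg E w x / w x y) * f x \<le> (1 + W) * f x"
      using W[OF y] fpos[of x] by (intro mult_right_mono) auto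
    then have "f y \<le> (1 + W) * f x" using nbr_le_of_Lap_nonpos[OF fpos Lap y] by linarith
    then show ?thesis using fpos[of y] w_pos_nbrs[OF y] by (intro mult_left_mono) auto
  qed
  have sum_f: "(W - 1) * f x * (\<Sum>y\<in>nbrs E x. w x y * f y) \<le> (W - 1) * f x * (deg E w x * f x)"
    and "(1 + W) * f x * (\<Sum>y\<in>nbrs E x. w x y * f y) \<le> (1 + W) * f x * (deg E w x * f x)"
    using sum_w_le_deg_of_Lap_nonpos[OF Lap] W1 fpos[of x] by (intro mult_left_mono; simp)+
  moreover have "(\<Sum>y\<in>nbrs E x. w x y * (f y)^2) \<le> (1 + W) * f x * (\<Sum>y\<in>nbrs E x. w x y * f y)"
    using sq unfolding sum_distrib_left
    by (intro sum_mono) (simp add: power2_eq_square algebra_simps)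
  ultimately show "(\<Sum>y\<in>nbrs E x. w x y * (f y)^2) \<le> (1 + W) * deg E w x * (f x)^2"
    by (simp add: power2_eq_square algebra_simps)
  have "(\<Sum>y\<in>nbrs E x. w x y * (f y - f x)^2)
      \<le> (\<Sum>y\<in>nbrs E x. w x y * (f x)^2 + (W - 1) * f x * (w x y * f y))"
    using sq by (intro sum_mono) (simp add: power2_eq_square algebra_simps)
  also have "\<dots> = deg E w x * (f x)^2 + (W - 1) * f x * (\<Sum>y\<in>nbrs E x. w x y * f y)"
    unfolding deg_def by (simp add: sum.distrib sum_distrib_left sum_distrib_right)
  finally show "(\<Sum>y\<in>nbrs E x. w x y * (f y - f x)^2) \<le> W * deg E w x * (f x)^2"
    using sum_f by (simp add: power2_eq_square algebra_simps)
qed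

lemma Gam_div_sq_le_of_Lap_nonpos:
  assumes fpos: "\<And>y. f y > 0" and Lap: "Lap E w mu f x \<le> 0"
    and W: "\<And>y. y \<in> nbrs E x \<Longrightarrow> deg E w x / w x y \<le> W" and W1: "W \<ge> 1"
  shows "2 * Gam E w mu f f x / (f x)^2 \<le> W * (deg E w x / mu x)"
proof -
  have pos: "mu x * (f x)^2 > 0" using mu_pos[of x] fpos[of x] by simp
  have "2 * Gam E w mu f f x / (f x)^2 = (\<Sum>y\<in>nbrs E x. w x y * (f y - f x)^2) / (mu x * (f x)^2)"
    unfolding Gam_self_eq_sum using pos by (simp add: field_simps)
  also have "\<dots> \<le> W * deg E w x * (f x)^2 / (mu x * (f x)^2)"
    using sum_w_sq_le_of_Lap_nonpos(2)[OF fpos Lap W W1] pos by (intro divide_right_mono) auto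
  also have "\<dots> = W * (deg E w x / mu x)" using mu_pos[of x] fpos[of x] by (simp add: field_simps)
  finally show ?thesis .
qed

lemma Lap_weighted_le_of_Lap_nonpos:
  assumes fpos: "\<And>y. f y > 0" and Lap: "Lap E w mu f x \<le> 0"
    and W: "\<And>y. y \<in> nbrs E x \<Longrightarrow> deg E w x / w x y \<le> W" and W1: "W \<ge> 1"
    and g: "\<And>y. y \<in> nbrs E x \<Longrightarrow> g y - g x \<le> c" and c: "c \<ge> 0"
  shows "Lap_weighted E w mu f g x \<le> c * (1 + W) * (deg E w x / mu x)"
proof -
  have pos: "mu x * (f x)^2 > 0" using mu_pos[of x] fpos[of x] by simp
  have "(\<Sum>y\<in>nbrs E x. w x y * (f y)^2 * (g y - g x)) \<le> (\<Sum>y\<in>nbrs E x. c * (w x y * (f y)^2))"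
  proof (rule sum_mono)
    fix y assume y: "y \<in> nbrs E x"
    show "w x y * (f y)^2 * (g y - g x) \<le> c * (w x y * (f y)^2)"
      using mult_left_mono[OF g[OF y], of "w x y * (f y)^2"] w_pos_nbrs[OF y]
      by (simp add: mult.commute)
  qed
  also have "\<dots> \<le> c * ((1 + W) * deg E w x * (f x)^2)"
    unfolding sum_distrib_left[symmetric]
    using sum_w_sq_le_of_Lap_nonpos(1)[OF fpos Lap W W1] c by (rule mult_left_mono)
  finally have "Lap_weighted E w mu f g x \<le> c * ((1 + W) * deg E w x * (f x)^2) / (mu x * (f x)^2)"
    unfolding Lap_weighted_def using pos by (intro divide_right_mono) auto
  also have "\<dots> = c * (1 + W) * (deg E w x / mu x)"
    using mu_pos[of x] fpos[of x] by (simp add: field_simps)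
  finally show ?thesis .
qed

text \<open>Testing \<open>CDE(n,-K)\<close> against the function that equals \<open>1\<close> at \<open>x\<close> and \<open>1 + \<epsilon>\<close>
  elsewhere, and letting \<open>\<epsilon> \<rightarrow> 0\<close>, bounds \<open>deg(x)/\<mu>(x)\<close> by \<open>n (D\<^sub>\<mu> + K/2)\<close>.\<close>

lemma Lap_bump_nbr:
  assumes y: "y \<in> nbrs E x"
  shows "Lap E w mu (\<lambda>z. if z = x then 1 else 1 + \<epsilon>) y = - \<epsilon> * (w y x / mu y)"
    and "Gam E w mu (\<lambda>z. if z = x then 1 else 1 + \<epsilon>) (\<lambda>z. if z = x then 1 else 1 + \<epsilon>) y
      = \<epsilon>^2 / 2 * (w y x / mu y)"
proof -
  let ?f = "\<lambda>z. if z = x then 1 else 1 + \<epsilon>"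
  have x: "x \<in> nbrs E y" and yx: "y \<noteq> x" using y sym irrefl unfolding nbrs_def by auto
  have single: "(\<Sum>z\<in>nbrs E y. w y z * F (?f z - ?f y)) = w y x * F (- \<epsilon>)" if "F 0 = 0" for F
    using finite_nbrs x yx that by (subst sum.mono_neutral_right[of _ "{x}"]) auto
  show "Lap E w mu ?f y = - \<epsilon> * (w y x / mu y)"
    using single[of "\<lambda>s. s"] unfolding Lap_def by simp
  show "Gam E w mu ?f ?f y = \<epsilon>^2 / 2 * (w y x / mu y)"
    using single[of "\<lambda>s. s^2"] unfolding Gam_self_eq_sum by simp
qed

lemma Gam2_tilde_bump:
  fixes x :: 'a and \<epsilon> :: real
  assumes eps: "\<epsilon> > 0"
  defines "f \<equiv> \<lambda>z. if z = x then 1 else 1 + \<epsilon>"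
    and "d \<equiv> deg E w x / mu x"
    and "S \<equiv> (\<Sum>y\<in>nbrs E x. w x y * (w y x / mu y)) / mu x"
  shows "Lap E w mu f x = \<epsilon> * d"
    and "Gam E w mu f f x = \<epsilon>^2 / 2 * d"
    and "2 * Gam2_tilde E w mu f x
      = \<epsilon>^2 * S + \<epsilon>^2 * d^2 / 2 + \<epsilon>^2 * S / (2 * (1 + \<epsilon>)) + \<epsilon>^3 * d^2 / 2"
proof -
  have fnz: "\<And>z. f z \<noteq> 0" unfolding f_def using eps by auto
  have mnz: "\<And>a. mu a \<noteq> 0" using mu_pos by (metis less_irrefl)
  have fx: "f x = 1" unfolding f_def by simp
  have fy: "\<And>y. y \<in> nbrs E x \<Longrightarrow> f y = 1 + \<epsilon>"
    unfolding f_def nbrs_def using irrefl by auto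
  note Lap_y = Lap_bump_nbr(1)[of _ x \<epsilon>, folded f_def]
  note Gam_y = Lap_bump_nbr(2)[of _ x \<epsilon>, folded f_def]
  show Lap_x: "Lap E w mu f x = \<epsilon> * d"
    using Lap_eq_of_nbrs_affine[of E x f "1 + \<epsilon>" 0 w mu] fy fx mnz[of x] unfolding d_def
    by (simp add: field_simps)
  have "(\<Sum>y\<in>nbrs E x. w x y * (f y - f x)^2) = (\<Sum>y\<in>nbrs E x. \<epsilon>^2 * w x y)"
    by (rule sum.cong) (auto simp: fy fx)
  then show Gam_x: "Gam E w mu f f x = \<epsilon>^2 / 2 * d"
    unfolding Gam_self_eq_sum d_def deg_def by (simp add: sum_distrib_left[symmetric])
  let ?g = "Lap E w mu f" and ?q = "\<lambda>y. Gam E w mu f f y / f y"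
  have L1: "Lap E w mu (\<lambda>y. f y * ?g y) x = 0 * d + (- (1 + \<epsilon>) * \<epsilon>) * S - (f x * ?g x) * d"
    unfolding d_def S_def by (rule Lap_eq_of_nbrs_affine) (simp add: fy Lap_y mnz field_simps)
  have L2: "Lap E w mu ?g x = 0 * d + (- \<epsilon>) * S - ?g x * d"
    unfolding d_def S_def by (rule Lap_eq_of_nbrs_affine) (simp add: Lap_y)
  have L3: "Lap E w mu ?q x = 0 * d + (\<epsilon>^2 / (2 * (1 + \<epsilon>))) * S - ?q x * d"
    unfolding d_def S_def
    by (rule Lap_eq_of_nbrs_affine) (use eps in \<open>simp add: fy Gam_y mnz field_simps\<close>)
  show "2 * Gam2_tilde E w mu f x
      = \<epsilon>^2 * S + \<epsilon>^2 * d^2 / 2 + \<epsilon>^2 * S / (2 * (1 + \<epsilon>)) + \<epsilon>^3 * d^2 / 2"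
    unfolding Gam2_tilde_expand[where f=f, OF fnz] L1 L2 L3 Lap_x Gam_x fx using eps
    by (simp add: field_simps power2_eq_square power3_eq_cube)
qed

lemma return_sum_le:
  assumes D: "\<And>z. deg E w z / mu z \<le> D"
  shows "0 \<le> (\<Sum>y\<in>nbrs E x. w x y * (w y x / mu y)) / mu x"
    and "(\<Sum>y\<in>nbrs E x. w x y * (w y x / mu y)) / mu x \<le> deg E w x / mu x * D"
proof -
  have rev_edge: "0 < w y x" "w y x \<le> deg E w y" if "y \<in> nbrs E x" for y
    using that sym w_pos w_le_deg unfolding nbrs_def by auto
  show "0 \<le> (\<Sum>y\<in>nbrs E x. w x y * (w y x / mu y)) / mu x"
    using rev_edge w_pos_nbrs mu_pos
    by (intro divide_nonneg_pos sum_nonneg mult_nonneg_nonneg) (auto intro: less_imp_le)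
  have "(\<Sum>y\<in>nbrs E x. w x y * (w y x / mu y)) \<le> (\<Sum>y\<in>nbrs E x. w x y * D)"
  proof (rule sum_mono)
    fix y assume y: "y \<in> nbrs E x"
    have "w y x / mu y \<le> deg E w y / mu y"
      using rev_edge(2)[OF y] mu_pos[of y] by (simp add: divide_right_mono)
    then show "w x y * (w y x / mu y) \<le> w x y * D"
      using D[of y] w_pos_nbrs[OF y] by (intro mult_left_mono) auto
  qed
  then show "(\<Sum>y\<in>nbrs E x. w x y * (w y x / mu y)) / mu x \<le> deg E w x / mu x * D"
    unfolding deg_def using mu_pos[of x] by (simp add: sum_distrib_right divide_right_mono)
qed

lemma deg_div_mu_le_of_CDE_bump:
  assumes CDE: "CDE E w mu n (- K)" and n: "n > 0" and D: "\<And>z. deg E w z / mu z \<le> D"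
    and eps: "\<epsilon> > 0"
  shows "2 * (deg E w x / mu x)^2 / n \<le> deg E w x / mu x * (K + 2 * D + \<epsilon> * D / 2)"
proof -
  define f where "f = (\<lambda>z. if z = x then 1 else 1 + \<epsilon>)"
  define d where "d = deg E w x / mu x"
  define S where "S = (\<Sum>y\<in>nbrs E x. w x y * (w y x / mu y)) / mu x"
  note bump = Gam2_tilde_bump[OF eps, of x, folded f_def d_def S_def]
  have "(Lap E w mu f x)\<^sup>2 / n + (- K) * Gam E w mu f f x \<le> Gam2_tilde E w mu f x"
    using CDE eps unfolding CDE_def f_def by simp
  then have "\<epsilon>^2 * (2 * d^2 / n - K * d)
      \<le> \<epsilon>^2 * (S + d^2 / 2 + S / (2 * (1 + \<epsilon>)) + \<epsilon> * d^2 / 2)"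
    unfolding bump(1,2) using bump(3) by (simp add: field_simps power2_eq_square power3_eq_cube)
  then have "2 * d^2 / n - K * d \<le> S + d^2 / 2 + S / (2 * (1 + \<epsilon>)) + \<epsilon> * d^2 / 2"
    using eps by (simp add: mult_le_cancel_left)
  also have "\<dots> \<le> d * D + d * D / 2 + d * D / 2 + \<epsilon> * (d * D) / 2"
  proof -
    have "d \<ge> 0" "d \<le> D" unfolding d_def using deg_nonneg mu_pos[of x] D[of x] by simp_all
    then have "d^2 \<le> d * D" by (simp add: power2_eq_square mult_left_mono)
    moreover have "\<epsilon> * d^2 \<le> \<epsilon> * (d * D)" using calculation eps by (simp add: mult_left_mono)
    moreover have "S / (2 * (1 + \<epsilon>)) \<le> S / 2"
      using return_sum_le(1)[OF D, of x] eps unfolding S_def by (intro divide_left_mono) auto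
    moreover have "S \<le> d * D"
      using return_sum_le(2)[OF D, of x] unfolding S_def[symmetric] d_def[symmetric] .
    ultimately show ?thesis by linarith
  qed
  finally show ?thesis unfolding d_def[symmetric] by (simp add: algebra_simps)
qed

lemma deg_div_mu_le_of_CDE:
  assumes CDE: "CDE E w mu n (- K)" and n: "n > 0" and K: "K \<ge> 0"
    and D: "\<And>z. deg E w z / mu z \<le> D"
  shows "deg E w x / mu x \<le> n * (D + K / 2)"
proof -
  define d where "d = deg E w x / mu x"
  have "d \<ge> 0" unfolding d_def using deg_nonneg mu_pos[of x] by simp
  have dD: "d \<le> D" unfolding d_def by (rule D)
  show ?thesis
  proof (cases "d = 0")
    case True
    then show ?thesis using dD K n unfolding d_def[symmetric] by simp
  next
    case False
    with \<open>d \<ge> 0\<close> have "d > 0" by simp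
    have bump: "d \<le> n * (D + K / 2) + n * \<epsilon> * D / 4" if "\<epsilon> > 0" for \<epsilon>
    proof -
      have "d * (2 * d / n) \<le> d * (K + 2 * D + \<epsilon> * D / 2)"
        using deg_div_mu_le_of_CDE_bump[OF CDE n D that, of x] unfolding d_def[symmetric]
        by (simp add: power2_eq_square mult.commute mult.left_commute)
      then have "2 * d / n \<le> K + 2 * D + \<epsilon> * D / 2" using \<open>d > 0\<close> by (rule mult_left_le_imp_le)
      then show ?thesis using n by (simp add: field_simps)
    qed
    have "d \<le> n * (D + K / 2) + e" if "e > 0" for e
    proof -
      have "D > 0" using dD \<open>d > 0\<close> by simp
      then have "n * (4 * e / (n * D)) * D / 4 = e" using n by (simp add: field_simps)
      then show ?thesis using bump[of "4 * e / (n * D)"] \<open>D > 0\<close> n \<open>e > 0\<close> by simp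
    qed
    then show ?thesis unfolding d_def by (rule field_le_epsilon)
  qed
qed

lemma deg_div_mu_le_D_mu:
  "bdd_above (range (\<lambda>x. deg E w x / mu x)) \<Longrightarrow> deg E w x / mu x \<le> D_mu E w mu"
  unfolding D_mu_def by (rule cSUP_upper) auto

lemma deg_div_w_le_D_w:
  assumes "bdd_above ((\<lambda>p. deg E w (fst p) / w (fst p) (snd p)) ` {(x, y). E x y})" and "E x y"
  shows "deg E w x / w x y \<le> D_w E w"
  using cSUP_upper[OF _ assms(1), of "(x, y)"] assms(2) unfolding D_w_def by simp

lemma one_le_D_w:
  assumes "bdd_above ((\<lambda>p. deg E w (fst p) / w (fst p) (snd p)) ` {(x, y). E x y})" and "E x y"
  shows "1 \<le> D_w E w"
  using deg_div_w_le_D_w[OF assms] w_le_deg[OF assms(2)] w_pos[OF assms(2)]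
  by (meson le_divide_eq_1_pos order_trans)

lemma D_mu_le_sqrt_of_CDE:
  assumes CDE: "CDE E w mu n (- K)" and n: "n > 0" and K: "K \<ge> 0"
    and bdd: "bdd_above (range (\<lambda>x. deg E w x / mu x))"
    and W: "1 \<le> W" and small: "n * (1 + W) < 1"
  shows "D_mu E w mu \<le> sqrt (n * K * D_mu E w mu * (W + 1) / 2)"
proof -
  define D where "D = D_mu E w mu"
  have D_nonneg: "D \<ge> 0"
    using deg_div_mu_le_D_mu[OF bdd, of x] deg_nonneg[of x] mu_pos[of x] unfolding D_def
    by (meson divide_nonneg_pos order_trans)
  have "D \<le> n * (D + K / 2)"
    using deg_div_mu_le_of_CDE[OF CDE n K deg_div_mu_le_D_mu[OF bdd]] unfolding D_def D_mu_def
    by (intro cSUP_least) auto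
  then have D_le: "D * (1 - n) \<le> n * K / 2" by (simp add: algebra_simps)
  have "1 \<le> (1 - n) * (1 + W)" using W small by (simp add: algebra_simps)
  then have "D^2 \<le> D^2 * ((1 - n) * (1 + W))" by (simp add: mult_le_cancel_left1)
  then have "D^2 \<le> (D * (1 - n)) * (D * (1 + W))" by (simp add: power2_eq_square algebra_simps)
  also have "\<dots> \<le> (n * K / 2) * (D * (1 + W))"
    using D_le D_nonneg W by (intro mult_right_mono) auto
  finally have "D^2 \<le> n * K * D * (W + 1) / 2" by (simp add: algebra_simps)
  then show ?thesis unfolding D_def by (rule real_le_rsqrt)
qed

end

section \<open>Graph distance and the cutoff function\<close>

lemma gdist_path:
  assumes "E\<^sup>*\<^sup>* v x0"
  shows "(E ^^ gdist E v x0) v x0"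
proof -
  from rtranclp_imp_relpowp[OF assms] obtain k where "(E ^^ k) v x0" by blast
  then show ?thesis unfolding gdist_def by (rule LeastI)
qed

lemma gdist_le: "(E ^^ k) v x0 \<Longrightarrow> gdist E v x0 \<le> k"
  unfolding gdist_def by (rule Least_le)

lemma clamp_le_add: "(a::real) \<le> b + c \<Longrightarrow> 0 \<le> c \<Longrightarrow> max 0 (min 1 a) \<le> max 0 (min 1 b) + c"
  by (auto simp: max_def min_def)

lemma less_of_less_clamp: "0 \<le> c \<Longrightarrow> c < max 0 (min 1 (a::real)) \<Longrightarrow> c < a"
  by (auto simp: max_def min_def split: if_splits)

definition cutoff :: "('a \<Rightarrow> 'a \<Rightarrow> bool) \<Rightarrow> 'a \<Rightarrow> real \<Rightarrow> 'a \<Rightarrow> real" where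
  "cutoff E x0 R v = max 0 (min 1 ((2 * R - real (gdist E v x0)) / R))"

lemma cutoff_nonneg: "0 \<le> cutoff E x0 R v"
  and cutoff_le_one: "cutoff E x0 R v \<le> 1"
  unfolding cutoff_def by auto

lemma cutoff_eq_one: "R > 0 \<Longrightarrow> v \<in> gball E x0 R \<Longrightarrow> cutoff E x0 R v = 1"
  unfolding cutoff_def gball_def by (simp add: field_simps)

lemma gdist_lt_of_cutoff_gt:
  assumes R: "R > 0" and c: "c \<ge> 0" and gt: "cutoff E x0 R v > c / R"
  shows "real (gdist E v x0) + c < 2 * R"
proof -
  have "c / R < (2 * R - real (gdist E v x0)) / R"
    using less_of_less_clamp[OF _ gt[unfolded cutoff_def]] c R by simp
  then have "c < 2 * R - real (gdist E v x0)"
    using R by (simp add: field_simps)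
  then show ?thesis by simp
qed

context wgraph
begin

lemma gdist_nbr_le:
  assumes "E x y"
  shows "gdist E y x0 \<le> gdist E x x0 + 1"
proof -
  have "(E ^^ Suc (gdist E x x0)) y x0"
    using gdist_path[OF connected] sym[OF assms] by (rule relpowp_Suc_I2[rotated])
  then show ?thesis using gdist_le by fastforce
qed

lemma finite_gdist_le: "finite {v. gdist E v x0 \<le> k}"
proof (induction k)
  case 0
  have "{v. gdist E v x0 \<le> 0} \<subseteq> {x0}"
  proof
    fix v assume "v \<in> {v. gdist E v x0 \<le> 0}"
    then have "(E ^^ 0) v x0" using gdist_path[OF connected, of v x0] by simp
    then show "v \<in> {x0}" by simp
  qed
  then show ?case using finite_subset by blast
next
  case (Suc k)
  let ?B = "{v. gdist E v x0 \<le> k}"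
  have "{v. gdist E v x0 \<le> Suc k} \<subseteq> ?B \<union> (\<Union>z\<in>?B. nbrs E z)"
  proof
    fix v assume v: "v \<in> {v. gdist E v x0 \<le> Suc k}"
    show "v \<in> ?B \<union> (\<Union>z\<in>?B. nbrs E z)"
    proof (cases "gdist E v x0 \<le> k")
      case False
      then have "gdist E v x0 = Suc k" using v by simp
      then have "(E ^^ Suc k) v x0" using gdist_path[OF connected, of v x0] by simp
      then obtain b where "E v b" "(E ^^ k) b x0" using relpowp_Suc_D2 by metis
      then have "b \<in> ?B" "v \<in> nbrs E b" using gdist_le sym unfolding nbrs_def by auto
      then show ?thesis by blast
    qed simp
  qed
  moreover have "finite (?B \<union> (\<Union>z\<in>?B. nbrs E z))" using Suc finite_nbrs by auto
  ultimately show ?case using finite_subset by blast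
qed

lemma cutoff_lipschitz:
  assumes R: "R > 0" and "E x y"
  shows "cutoff E x0 R x \<le> cutoff E x0 R y + 1 / R"
proof -
  have "2 * R - real (gdist E x x0) \<le> (2 * R - real (gdist E y x0)) + 1"
    using gdist_nbr_le[OF \<open>E x y\<close>, of x0] by linarith
  then have "(2 * R - real (gdist E x x0)) / R \<le> ((2 * R - real (gdist E y x0)) + 1) / R"
    using R by (intro divide_right_mono) auto
  then have "(2 * R - real (gdist E x x0)) / R \<le> (2 * R - real (gdist E y x0)) / R + 1 / R"
    by (simp add: add_divide_distrib)
  then show ?thesis unfolding cutoff_def using R by (intro clamp_le_add) auto
qed

lemma nbrs_in_gball_of_cutoff_gt:
  assumes R: "R > 0" and gt: "cutoff E x0 R v > 1 / R"
  shows "v \<in> gball E x0 (2 * R)" and "\<And>y. y \<in> nbrs E v \<Longrightarrow> y \<in> gball E x0 (2 * R)"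
proof -
  have d: "real (gdist E v x0) + 1 < 2 * R" using gdist_lt_of_cutoff_gt[OF R _ gt] by simp
  then show "v \<in> gball E x0 (2 * R)" unfolding gball_def by simp
  fix y assume "y \<in> nbrs E v"
  then have "gdist E y x0 \<le> gdist E v x0 + 1" using gdist_nbr_le unfolding nbrs_def by blast
  then show "y \<in> gball E x0 (2 * R)" using d unfolding gball_def by simp
qed

lemma finite_cutoff_support:
  assumes R: "R > 0"
  shows "finite {v. cutoff E x0 R v > 0}"
proof (rule finite_subset[OF _ finite_gdist_le])
  show "{v. cutoff E x0 R v > 0} \<subseteq> {v. gdist E v x0 \<le> nat \<lceil>2 * R\<rceil>}"
  proof
    fix v assume "v \<in> {v. cutoff E x0 R v > 0}"
    then have "real (gdist E v x0) < 2 * R" using gdist_lt_of_cutoff_gt[OF R, of 0] by simp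
    then have "gdist E v x0 \<le> nat \<lceil>2 * R\<rceil>" by linarith
    then show "v \<in> {v. gdist E v x0 \<le> nat \<lceil>2 * R\<rceil>}" by simp
  qed
qed

end

lemma finite_family_attains_sup:
  fixes F :: "'a \<Rightarrow> 'b::topological_space \<Rightarrow> real"
  assumes fin: "finite A" and "A \<noteq> {}" and T: "compact T" "T \<noteq> {}"
    and cont: "\<And>y. y \<in> A \<Longrightarrow> continuous_on T (F y)"
  shows "\<exists>y\<in>A. \<exists>t\<in>T. \<forall>z\<in>A. \<forall>s\<in>T. F z s \<le> F y t"
proof -
  obtain tm where tm: "\<And>y. y \<in> A \<Longrightarrow> tm y \<in> T \<and> (\<forall>s\<in>T. F y s \<le> F y (tm y))"
    using continuous_attains_sup[OF T cont] by metis
  have "Max ((\<lambda>y. F y (tm y)) ` A) \<in> (\<lambda>y. F y (tm y)) ` A"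
    using fin \<open>A \<noteq> {}\<close> by (intro Max_in) auto
  then obtain y where y: "y \<in> A" "F y (tm y) = Max ((\<lambda>y. F y (tm y)) ` A)" by auto
  have "F z s \<le> F y (tm y)" if "z \<in> A" "s \<in> T" for z s
  proof -
    have "F z s \<le> F z (tm z)" using tm[OF \<open>z \<in> A\<close>] \<open>s \<in> T\<close> by blast
    also have "\<dots> \<le> Max ((\<lambda>y. F y (tm y)) ` A)" using fin \<open>z \<in> A\<close> by (intro Max_ge) auto
    finally show ?thesis using y(2) by simp
  qed
  then show ?thesis using y(1) tm[OF y(1)] by blast
qed

lemma has_real_derivative_nonneg_at_left_max:
  fixes f :: "real \<Rightarrow> real"
  assumes der: "(f has_real_derivative l) (at t within {a..})" and "a < t"
    and max: "\<And>s. a \<le> s \<Longrightarrow> s \<le> t \<Longrightarrow> f s \<le> f t"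
  shows "0 \<le> l"
proof (rule ccontr)
  assume "\<not> 0 \<le> l"
  then obtain d where "d > 0" and d: "\<And>h. h > 0 \<Longrightarrow> t - h \<in> {a..} \<Longrightarrow> h < d \<Longrightarrow> f t < f (t - h)"
    using has_real_derivative_neg_dec_left[OF der] by force
  define h where "h = min (d / 2) (t - a)"
  have "f t < f (t - h)" using \<open>d > 0\<close> \<open>a < t\<close> by (intro d) (auto simp: h_def)
  moreover have "f (t - h) \<le> f t" using \<open>d > 0\<close> \<open>a < t\<close> by (intro max) (auto simp: h_def)
  ultimately show False by simp
qed

lemma lap_ratio_has_derivative:
  assumes der: "\<And>z. ((\<lambda>s. f z s) has_real_derivative f' z) (at t within S)" and "f y t \<noteq> 0"
  shows "((\<lambda>s. lap_ratio E w mu (\<lambda>z. f z s) y) has_real_derivative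
      - (Lap E w mu f' y * f y t - Lap E w mu (\<lambda>z. f z t) y * f' y) / (f y t)^2) (at t within S)"
proof -
  have "((\<lambda>s. Lap E w mu (\<lambda>z. f z s) y) has_real_derivative Lap E w mu f' y) (at t within S)"
    unfolding Lap_def by (intro DERIV_cdivide DERIV_sum DERIV_cmult DERIV_diff der)
  from DERIV_divide[OF DERIV_minus[OF this] der \<open>f y t \<noteq> 0\<close>] show ?thesis
    unfolding lap_ratio_def by (simp add: power2_eq_square algebra_simps)
qed

lemma le_of_quadratic_le:
  fixes G n B C :: real
  assumes n: "n > 0" and C: "C \<ge> 0" and B: "B \<ge> 0"
    and quadratic: "(2 / n) * G^2 \<le> G * B + C^2 * 2 / n"
  shows "G \<le> n * B / 2 + C"
proof (rule ccontr)
  assume "\<not> G \<le> n * B / 2 + C"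
  then have G_gt: "G > n * B / 2 + C" by simp
  moreover have "n * B / 2 \<ge> 0" using n B by simp
  ultimately have "G > C" by linarith
  have "C * C \<le> G * C" using \<open>G > C\<close> C by (intro mult_right_mono) auto
  then have "G * B + (2 / n) * C * C \<le> G * B + (2 / n) * G * C"
    using mult_left_mono[of "C * C" "G * C" "2 / n"] n by (simp add: mult.assoc)
  also have "\<dots> = (2 / n) * G * (n * B / 2 + C)" using n by (simp add: field_simps)
  also have "\<dots> < (2 / n) * G * G"
    using G_gt \<open>G > C\<close> C n by (intro mult_strict_left_mono) auto
  finally show False using quadratic by (simp add: power2_eq_square mult.commute)
qed

lemma max_point_quadratic_ineq:
  fixes t ph h ht Du n K A :: real
  assumes t: "t > 0" and ph: "0 < ph" "ph \<le> 1" and h: "h > 0"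
    and time: "0 \<le> ph * h + t * ph * ht"
    and key: "ht \<le> Du - (2 / n) * h^2 + K * A"
  shows "(2 / n) * (t * ph * h)^2 \<le> t * ph * h + t^2 * (ph^2 * Du) + (t * ph)^2 * (K * A)"
proof -
  have tph: "t * ph \<ge> 0" using t ph by simp
  have "- (ph * h) \<le> t * ph * (Du - (2 / n) * h^2 + K * A)"
    using time mult_left_mono[OF key tph] by linarith
  from mult_left_mono[OF this tph]
  have "(2 / n) * (t * ph * h)^2 \<le> t * ph * (ph * h) + t^2 * (ph^2 * Du) + (t * ph)^2 * (K * A)"
    by (simp add: power2_eq_square algebra_simps)
  moreover have "t * ph * (ph * h) \<le> t * ph * h"
    using mult_left_mono[OF ph(2), of "t * ph * h"] t ph h by (simp add: algebra_simps)
  ultimately show ?thesis by linarith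
qed

lemma max_point_quadratic_estimate:
  fixes ph h ht Du G t T n K A lam D :: real
  assumes t: "t > 0" "t \<le> T" and ph: "0 < ph" "ph \<le> 1" and h: "h > 0" and n: "n > 0"
    and K: "K > 0" and A: "A \<ge> 0" and lam: "lam > 0" and D: "D \<ge> 0"
    and G: "G = t * ph * h" and G_gt: "G > T * lam * D"
    and time: "0 \<le> ph * h + t * ph * ht"
    and key: "ht \<le> Du - (2 / n) * h^2 + K * A"
    and lap: "ph^2 * Du \<le> A * (lam * (ph * h + lam * D))"
  shows "G \<le> n * (1 + 2 * T * A * lam) / 2 + T * sqrt (n * K * A / 2)"
proof -
  have G_nonneg: "G \<ge> 0" unfolding G using t ph h by simp
  have "t * (lam * D) \<le> T * (lam * D)" using t lam D by (intro mult_right_mono) auto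
  then have "t * lam * D \<le> G" using G_gt by (simp add: mult.assoc)
  then have "t^2 * (ph^2 * Du) \<le> A * lam * t * G + A * lam * t * G"
    using mult_left_mono[OF lap, of "t^2"] mult_left_mono[of "t * lam * D" G "A * lam * t"] A lam t
    unfolding G by (simp add: power2_eq_square algebra_simps)
  also have "\<dots> \<le> 2 * T * A * lam * G"
    using mult_right_mono[OF t(2), of "A * lam * G"] A lam G_nonneg by (simp add: algebra_simps)
  finally have Du_term: "t^2 * (ph^2 * Du) \<le> 2 * T * A * lam * G" .
  have "t * ph \<le> T" using t ph mult_left_le[of ph t] by linarith
  then have "(t * ph)^2 * (K * A) \<le> T^2 * (K * A)"
    using t ph K A by (intro mult_right_mono power_mono) auto
  also have "\<dots> = (T * sqrt (n * K * A / 2))^2 * 2 / n"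
    using n K A by (simp add: power_mult_distrib field_simps)
  finally have "(2 / n) * G^2 \<le> G * (1 + 2 * T * A * lam) + (T * sqrt (n * K * A / 2))^2 * 2 / n"
    using max_point_quadratic_ineq[OF t(1) ph h time key] Du_term unfolding G[symmetric]
    by (simp add: algebra_simps)
  moreover have "0 \<le> T * sqrt (n * K * A / 2)" using t n K A by simp
  moreover have "0 \<le> 1 + 2 * T * A * lam" using t A lam by simp
  ultimately show ?thesis using le_of_quadratic_le[OF n] by blast
qed

lemma cutoff_diff_estimate:
  fixes ph phy h hy lam D :: real
  assumes phy: "0 \<le> phy" and lip: "ph \<le> phy + lam" and max: "phy * hy \<le> ph * h"
    and hy: "hy \<le> D" and h: "h > 0" and ph: "ph > 0" and lam: "lam > 0" and D: "D \<ge> 0"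
  shows "ph^2 * (hy - h) \<le> lam * (ph * h + lam * D)"
proof (cases "hy \<le> h")
  case True
  then have "ph^2 * (hy - h) \<le> 0" by (simp add: mult_nonneg_nonpos)
  also have "0 \<le> lam * (ph * h + lam * D)" using lam ph h D by simp
  finally show ?thesis .
next
  case False
  then have "hy > 0" using h by simp
  have "ph^2 * (hy - h) \<le> ph * (ph * hy - phy * hy)"
    using mult_left_mono[OF max, of ph] ph by (simp add: power2_eq_square algebra_simps)
  also have "\<dots> \<le> lam * (ph * h + lam * D)"
  proof (cases "ph \<le> phy")
    case True
    then have "ph * (ph * hy - phy * hy) \<le> 0"
      using ph \<open>hy > 0\<close> by (simp add: mult_nonneg_nonpos mult_right_mono)
    also have "0 \<le> lam * (ph * h + lam * D)" using lam ph h D by simp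
    finally show ?thesis .
  next
    case False
    have "(ph - phy) * hy \<le> lam * D"
      using False lip hy \<open>hy > 0\<close> lam by (intro mult_mono) auto
    then have "ph * hy \<le> ph * h + lam * D" using max by (simp add: algebra_simps)
    then have "(ph - phy) * (ph * hy) \<le> lam * (ph * h + lam * D)"
      using False lip ph \<open>hy > 0\<close> by (intro mult_mono) auto
    then show ?thesis by (simp add: algebra_simps)
  qed
  finally show ?thesis .
qed

section \<open>Positive solutions of the heat equation on a ball\<close>

locale heat_ball = wgraph +
  fixes x0 :: 'a and R :: real and u u_t :: "'a \<Rightarrow> real \<Rightarrow> real"
  assumes R_pos: "R > 0"
    and u_pos: "\<And>x t. t \<ge> 0 \<Longrightarrow> u x t > 0"
    and u_deriv: "\<And>x t. t \<ge> 0 \<Longrightarrow> ((\<lambda>s. u x s) has_real_derivative u_t x t) (at t within {0..})"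
    and heat: "\<And>x t. x \<in> gball E x0 (2 * R) \<Longrightarrow> t \<ge> 0 \<Longrightarrow> u_t x t = Lap E w mu (\<lambda>y. u y t) x"
begin

definition li_yau :: "'a \<Rightarrow> real \<Rightarrow> real" where
  "li_yau x t = lap_ratio E w mu (\<lambda>y. sqrt (u y t)) x"

definition li_yau_t :: "'a \<Rightarrow> real \<Rightarrow> real" where
  "li_yau_t x t = - (Lap E w mu (\<lambda>y. u_t y t / (2 * sqrt (u y t))) x * sqrt (u x t)
      - Lap E w mu (\<lambda>y. sqrt (u y t)) x * (u_t x t / (2 * sqrt (u x t)))) / (sqrt (u x t))^2"

lemma sqrt_u_has_derivative:
  "t \<ge> 0 \<Longrightarrow>
    ((\<lambda>s. sqrt (u x s)) has_real_derivative u_t x t / (2 * sqrt (u x t))) (at t within {0..})"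
  using u_deriv[of t x] u_pos[of t x] by (auto intro!: derivative_eq_intros simp: field_simps)

lemma li_yau_has_derivative:
  assumes "t \<ge> 0"
  shows "((\<lambda>s. li_yau x s) has_real_derivative li_yau_t x t) (at t within {0..})"
  unfolding li_yau_def li_yau_t_def
  using sqrt_u_has_derivative[OF assms] u_pos[OF assms, of x]
  by (intro lap_ratio_has_derivative) auto

lemma li_yau_le_deg_div_mu: "t \<ge> 0 \<Longrightarrow> li_yau x t \<le> deg E w x / mu x"
  unfolding li_yau_def using u_pos by (intro lap_ratio_le_deg_div_mu) simp

lemma Lap_u_eq:
  "t \<ge> 0 \<Longrightarrow> Lap E w mu (\<lambda>y. u y t) x = Lap E w mu (\<lambda>y. sqrt (u y t) * sqrt (u y t)) x"
  using u_pos by (intro Lap_cong) (simp_all add: less_imp_le)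

lemma sqrt_u_time_deriv_eq:
  assumes "x \<in> gball E x0 (2 * R)" and "t \<ge> 0"
  shows "u_t x t / (2 * sqrt (u x t))
    = Lap E w mu (\<lambda>y. sqrt (u y t)) x
      + Gam E w mu (\<lambda>y. sqrt (u y t)) (\<lambda>y. sqrt (u y t)) x / sqrt (u x t)"
  unfolding heat[OF assms] Lap_u_eq[OF \<open>t \<ge> 0\<close>] Lap_mult_self
  using u_pos[OF \<open>t \<ge> 0\<close>, of x] by (simp add: field_simps)

lemma li_yau_eq:
  assumes "x \<in> gball E x0 (2 * R)" and "t > 0"
  shows "Gam E w mu (\<lambda>y. sqrt (u y t)) (\<lambda>y. sqrt (u y t)) x / u x t
      - deriv (\<lambda>s. sqrt (u x s)) t / sqrt (u x t) = li_yau x t"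
proof -
  have "t \<ge> 0" using \<open>t > 0\<close> by simp
  have "at t within {0..} = at t"
    using \<open>t > 0\<close> by (intro at_within_interior) (simp add: interior_real_atLeast)
  then have "deriv (\<lambda>s. sqrt (u x s)) t = u_t x t / (2 * sqrt (u x t))"
    using sqrt_u_has_derivative[of t x] \<open>t > 0\<close> by (intro DERIV_imp_deriv) simp
  also have "\<dots> = Lap E w mu (\<lambda>y. sqrt (u y t) * sqrt (u y t)) x / (2 * sqrt (u x t))"
    unfolding heat[OF assms(1) \<open>t \<ge> 0\<close>] Lap_u_eq[OF \<open>t \<ge> 0\<close>] ..
  finally show ?thesis
    using Gam_div_sq_sub_half_Lap[of "\<lambda>y. sqrt (u y t)" x E w mu] u_pos[of t x] \<open>t > 0\<close>
    unfolding li_yau_def by simp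
qed

lemma li_yau_t_le_of_CDE:
  assumes CDE: "CDE E w mu n (- K)" and "t \<ge> 0"
    and x: "x \<in> gball E x0 (2 * R)" and nbrs: "\<And>y. y \<in> nbrs E x \<Longrightarrow> y \<in> gball E x0 (2 * R)"
  shows "li_yau_t x t \<le> Lap_weighted E w mu (\<lambda>y. sqrt (u y t)) (\<lambda>y. li_yau y t) x
    - (2 / n) * (li_yau x t)^2
    + 2 * K * Gam E w mu (\<lambda>y. sqrt (u y t)) (\<lambda>y. sqrt (u y t)) x / (sqrt (u x t))^2"
  using lap_ratio_time_deriv_le_of_CDE[where f="\<lambda>y. sqrt (u y t)"
      and p="\<lambda>y. u_t y t / (2 * sqrt (u y t))",
      OF _ sqrt_u_time_deriv_eq[OF nbrs \<open>t \<ge> 0\<close>] sqrt_u_time_deriv_eq[OF x \<open>t \<ge> 0\<close>] CDE]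
    u_pos[OF \<open>t \<ge> 0\<close>]
  unfolding li_yau_t_def li_yau_def[abs_def] by simp

definition weighted_li_yau :: "'a \<Rightarrow> real \<Rightarrow> real" where
  "weighted_li_yau x t = t * cutoff E x0 R x * li_yau x t"

lemma weighted_li_yau_has_derivative:
  assumes "t \<ge> 0"
  shows "(weighted_li_yau x has_real_derivative
      cutoff E x0 R x * li_yau x t + t * cutoff E x0 R x * li_yau_t x t) (at t within {0..})"
proof -
  have "((\<lambda>s. s * cutoff E x0 R x) has_real_derivative cutoff E x0 R x) (at t within {0..})"
    by (auto intro!: derivative_eq_intros)
  from DERIV_mult[OF this li_yau_has_derivative[OF assms]] show ?thesis
    unfolding weighted_li_yau_def[abs_def] by (simp add: algebra_simps)
qed

lemma weighted_li_yau_attains_max: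
  assumes "t \<ge> 0"
  obtains xs ts where "ts \<in> {0..t}"
    and "\<And>z s. s \<in> {0..t} \<Longrightarrow> weighted_li_yau z s \<le> weighted_li_yau xs ts"
proof -
  let ?S = "insert x0 {v. cutoff E x0 R v > 0}"
  have "continuous_on {0..t} (weighted_li_yau y)" for y
    unfolding continuous_on_eq_continuous_within
    using DERIV_continuous[OF weighted_li_yau_has_derivative] continuous_within_subset
    by (metis atLeastAtMost_iff atLeast_iff subsetI)
  then obtain xs ts where ts: "ts \<in> {0..t}"
    and max: "\<And>z s. z \<in> ?S \<Longrightarrow> s \<in> {0..t} \<Longrightarrow> weighted_li_yau z s \<le> weighted_li_yau xs ts"
    using finite_family_attains_sup[of ?S "{0..t}" weighted_li_yau]
      finite_cutoff_support[OF R_pos] assms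
    by fastforce
  have "weighted_li_yau z s \<le> weighted_li_yau xs ts" if s: "s \<in> {0..t}" for z s
  proof (cases "z \<in> ?S")
    case False
    then have "weighted_li_yau z s = weighted_li_yau x0 0"
      using cutoff_nonneg[of E x0 R z] unfolding weighted_li_yau_def by simp
    then show ?thesis using max[of x0 0] assms by simp
  qed (use max s in blast)
  with ts show ?thesis by (rule that)
qed

end

section \<open>The maximum principle argument\<close>

locale li_yau_setting = heat_ball +
  fixes D W n K :: real
  assumes deg_div_mu_le: "deg E w x / mu x \<le> D"
    and deg_div_w_le: "E x y \<Longrightarrow> deg E w x / w x y \<le> W"
    and one_le_W: "1 \<le> W"
    and n_pos: "n > 0" and K_pos: "K > 0"
    and CDE: "CDE E w mu n (- K)"
begin

abbreviation A :: real where "A \<equiv> D * (1 + W)"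

lemma D_nonneg: "D \<ge> 0"
  using deg_div_mu_le[of x0] deg_nonneg[of x0] mu_pos[of x0]
  by (meson divide_nonneg_pos order_trans)

lemma li_yau_le_D: "t \<ge> 0 \<Longrightarrow> li_yau x t \<le> D"
  using li_yau_le_deg_div_mu deg_div_mu_le order_trans by blast

lemma Lap_sqrt_u_nonpos: "t \<ge> 0 \<Longrightarrow> li_yau x t > 0 \<Longrightarrow> Lap E w mu (\<lambda>y. sqrt (u y t)) x \<le> 0"
  using u_pos[of t x] unfolding li_yau_def lap_ratio_def by (auto simp: divide_less_0_iff)

lemma li_yau_t_le_at_max:
  assumes t: "t \<ge> 0" and pos: "li_yau x t > 0" and big: "cutoff E x0 R x > 1 / R"
  shows "li_yau_t x t \<le> Lap_weighted E w mu (\<lambda>y. sqrt (u y t)) (\<lambda>y. li_yau y t) x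
    - (2 / n) * (li_yau x t)^2 + K * A"
proof -
  have "2 * Gam E w mu (\<lambda>y. sqrt (u y t)) (\<lambda>y. sqrt (u y t)) x / (sqrt (u x t))^2
      \<le> W * (deg E w x / mu x)"
    using u_pos[OF t] Lap_sqrt_u_nonpos[OF t pos] deg_div_w_le one_le_W
    by (intro Gam_div_sq_le_of_Lap_nonpos) (auto simp: nbrs_def)
  also have "\<dots> \<le> A"
    using mult_left_mono[OF deg_div_mu_le[of x], of W] one_le_W D_nonneg
    by (simp add: algebra_simps)
  finally have
    "K * (2 * Gam E w mu (\<lambda>y. sqrt (u y t)) (\<lambda>y. sqrt (u y t)) x / (sqrt (u x t))^2) \<le> K * A"
    using K_pos by (intro mult_left_mono) auto
  then have "2 * K * Gam E w mu (\<lambda>y. sqrt (u y t)) (\<lambda>y. sqrt (u y t)) x / (sqrt (u x t))^2 \<le> K * A"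
    by (simp add: algebra_simps)
  then show ?thesis
    using li_yau_t_le_of_CDE[OF CDE t nbrs_in_gball_of_cutoff_gt[OF R_pos big]] by linarith
qed

lemma Lap_weighted_li_yau_at_max:
  assumes t: "t \<ge> 0" and pos: "li_yau x t > 0" and cut: "cutoff E x0 R x > 0"
    and max: "\<And>y. y \<in> nbrs E x \<Longrightarrow> cutoff E x0 R y * li_yau y t \<le> cutoff E x0 R x * li_yau x t"
  shows "(cutoff E x0 R x)^2 * Lap_weighted E w mu (\<lambda>y. sqrt (u y t)) (\<lambda>y. li_yau y t) x
    \<le> A * ((1 / R) * (cutoff E x0 R x * li_yau x t + (1 / R) * D))"
proof -
  define c where "c = (1 / R) * (cutoff E x0 R x * li_yau x t + (1 / R) * D) / (cutoff E x0 R x)^2"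
  have c: "c \<ge> 0" unfolding c_def using R_pos cut pos D_nonneg by simp
  have diff: "li_yau y t - li_yau x t \<le> c" if y: "y \<in> nbrs E x" for y
  proof -
    have "(cutoff E x0 R x)^2 * (li_yau y t - li_yau x t)
        \<le> (1 / R) * (cutoff E x0 R x * li_yau x t + (1 / R) * D)"
    proof (rule cutoff_diff_estimate)
      show "cutoff E x0 R x \<le> cutoff E x0 R y + 1 / R"
        using cutoff_lipschitz[OF R_pos] y unfolding nbrs_def by blast
    qed (use cutoff_nonneg max[OF y] li_yau_le_D[OF t] pos cut R_pos D_nonneg in auto)
    then show ?thesis unfolding c_def using cut R_pos by (simp add: field_simps)
  qed
  have "Lap_weighted E w mu (\<lambda>y. sqrt (u y t)) (\<lambda>y. li_yau y t) x
      \<le> c * (1 + W) * (deg E w x / mu x)"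
    using u_pos[OF t] Lap_sqrt_u_nonpos[OF t pos] deg_div_w_le one_le_W c diff
    by (intro Lap_weighted_le_of_Lap_nonpos) (auto simp: nbrs_def)
  also have "\<dots> \<le> c * A"
    using mult_left_mono[OF deg_div_mu_le[of x], of "c * (1 + W)"] c one_le_W
    by (simp add: algebra_simps)
  finally show ?thesis
    unfolding c_def using cut R_pos by (simp add: field_simps)
qed

lemma weighted_li_yau_max_le:
  assumes ts: "ts \<in> {0..t}"
    and max: "\<And>z s. s \<in> {0..t} \<Longrightarrow> weighted_li_yau z s \<le> weighted_li_yau xs ts"
    and large: "weighted_li_yau xs ts > t * (1 / R) * D"
  shows "weighted_li_yau xs ts \<le> n * (1 + 2 * t * A * (1 / R)) / 2 + t * sqrt (n * K * A / 2)"
proof -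
  define ph h where "ph = cutoff E x0 R xs" and "h = li_yau xs ts"
  have G: "weighted_li_yau xs ts = ts * ph * h" unfolding weighted_li_yau_def ph_def h_def ..
  have ts0: "0 \<le> ts" "ts \<le> t" using ts by auto
  have "0 \<le> t * (1 / R) * D" using R_pos D_nonneg ts0 by simp
  then have pos: "0 < ts * (ph * h)" using large unfolding G by (simp add: mult.assoc)
  then have "ts > 0" using ts0 by (cases "ts = 0") auto
  then have "ph * h > 0" using pos by (simp add: zero_less_mult_iff)
  then have ph: "ph > 0" and h: "h > 0"
    using cutoff_nonneg[of E x0 R xs] unfolding ph_def by (auto simp: zero_less_mult_iff)
  have ph_le: "ph \<le> 1" unfolding ph_def by (rule cutoff_le_one)
  have big: "ph > 1 / R"
  proof (rule ccontr)
    assume "\<not> ph > 1 / R"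
    then have "ts * ph * h \<le> t * (1 / R) * D"
      using ts0 ph h li_yau_le_D[OF ts0(1), of xs] R_pos by (intro mult_mono) (auto simp: h_def)
    then show False using large unfolding G by simp
  qed
  have time: "0 \<le> ph * h + ts * ph * li_yau_t xs ts"
    using weighted_li_yau_has_derivative[OF ts0(1), of xs] \<open>ts > 0\<close> max ts0
    unfolding ph_def h_def
    by (intro has_real_derivative_nonneg_at_left_max[where f="weighted_li_yau xs"]) auto
  have key: "li_yau_t xs ts \<le> Lap_weighted E w mu (\<lambda>y. sqrt (u y ts)) (\<lambda>y. li_yau y ts) xs
      - (2 / n) * h^2 + K * A"
    using li_yau_t_le_at_max[OF ts0(1)] h big unfolding h_def ph_def by blast
  have lap: "ph^2 * Lap_weighted E w mu (\<lambda>y. sqrt (u y ts)) (\<lambda>y. li_yau y ts) xs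
      \<le> A * ((1 / R) * (ph * h + (1 / R) * D))"
  proof -
    have "cutoff E x0 R y * li_yau y ts \<le> ph * h" for y
      using max[OF ts, of y] \<open>ts > 0\<close> unfolding G weighted_li_yau_def
      by (simp add: mult.assoc ph_def h_def)
    then show ?thesis
      using Lap_weighted_li_yau_at_max[OF ts0(1)] h ph unfolding ph_def h_def by blast
  qed
  show ?thesis
    using large one_le_W D_nonneg R_pos
    by (intro max_point_quadratic_estimate[OF \<open>ts > 0\<close> ts0(2) ph ph_le h n_pos K_pos _ _ D_nonneg
          G _ time key lap]) auto
qed

lemma li_yau_le_of_D_le:
  assumes D: "D \<le> sqrt (n * K * D * (W + 1) / 2)" and t: "t > 0"
  shows "li_yau x t \<le> n / (2 * t) + sqrt (n * K * D * (W + 1) / 2) + n * D * (1 + W) / R"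
proof -
  have "0 \<le> n / (2 * t)" "0 \<le> n * D * (1 + W) / R"
    using n_pos t D_nonneg one_le_W R_pos by simp_all
  then show ?thesis using li_yau_le_D[of t x] D t by linarith
qed

lemma li_yau_le_of_max_principle:
  assumes n: "n * (1 + W) \<ge> 1" and x: "x \<in> gball E x0 R" and t: "t > 0"
  shows "li_yau x t \<le> n / (2 * t) + sqrt (n * K * D * (W + 1) / 2) + n * D * (1 + W) / R"
proof -
  obtain xs ts where ts: "ts \<in> {0..t}"
    and max: "\<And>z s. s \<in> {0..t} \<Longrightarrow> weighted_li_yau z s \<le> weighted_li_yau xs ts"
    by (rule weighted_li_yau_attains_max[OF less_imp_le[OF t]]) blast
  have tx: "t * li_yau x t \<le> weighted_li_yau xs ts"
    using max[of t x] t cutoff_eq_one[OF R_pos x] unfolding weighted_li_yau_def by simp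
  show ?thesis
  proof (cases "weighted_li_yau xs ts \<le> t * (1 / R) * D")
    case True
    then have "t * li_yau x t \<le> t * (D / R)" using tx by simp
    then have "li_yau x t \<le> D / R" using t by (rule mult_left_le_imp_le)
    also have "\<dots> \<le> n * D * (1 + W) / R"
      using mult_left_mono[OF n D_nonneg] R_pos
      by (intro divide_right_mono) (auto simp: algebra_simps)
    finally have "li_yau x t \<le> n * D * (1 + W) / R" .
    moreover have "0 \<le> n / (2 * t)" "0 \<le> sqrt (n * K * D * (W + 1) / 2)"
      using n_pos K_pos t D_nonneg one_le_W by simp_all
    ultimately show ?thesis by linarith
  next
    case False
    then have "t * li_yau x t \<le> n * (1 + 2 * t * A * (1 / R)) / 2 + t * sqrt (n * K * A / 2)"
      using weighted_li_yau_max_le[OF ts max] tx by simp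
    also have "\<dots> = t * (n / (2 * t) + sqrt (n * K * D * (W + 1) / 2) + n * D * (1 + W) / R)"
      using t R_pos by (simp add: field_simps)
    finally show ?thesis using t by (simp add: mult_le_cancel_left_pos)
  qed
qed

end

theorem mainTheorem2:
  fixes E :: "'a \<Rightarrow> 'a \<Rightarrow> bool" and w :: "'a \<Rightarrow> 'a \<Rightarrow> real" and mu :: "'a \<Rightarrow> real"
    and n K R :: real and x0 :: 'a
    and u :: "'a \<Rightarrow> real \<Rightarrow> real" and u_t :: "'a \<Rightarrow> real \<Rightarrow> real"
  assumes graph: "weighted_graph E w mu"
    and has_edge: "\<exists>x y. E x y"
    and Dmu_fin: "bdd_above (range (\<lambda>x. deg E w x / mu x))"
    and Dw_fin: "bdd_above ((\<lambda>p. deg E w (fst p) / w (fst p) (snd p)) ` {(x, y). E x y})"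
    and n_pos: "n > 0" and K_pos: "K > 0"
    and CDE: "CDE E w mu n (- K)"
    and R_pos: "R > 0"
    and u_pos: "\<And>x t. t \<ge> 0 \<Longrightarrow> u x t > 0"
    and u_deriv: "\<And>x t. t \<ge> 0 \<Longrightarrow> ((\<lambda>s. u x s) has_real_derivative u_t x t) (at t within {0..})"
    and u_t_cont: "\<And>x. continuous_on {0..} (u_t x)"
    and heat: "\<And>x t. x \<in> gball E x0 (2 * R) \<Longrightarrow> t \<ge> 0 \<Longrightarrow>
                 u_t x t = Lap E w mu (\<lambda>y. u y t) x"
  shows "\<forall>x\<in>gball E x0 R. \<forall>t>0.
           Gam E w mu (\<lambda>y. sqrt (u y t)) (\<lambda>y. sqrt (u y t)) x / u x t
             - deriv (\<lambda>s. sqrt (u x s)) t / sqrt (u x t)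
           \<le> n / (2 * t) + sqrt (n * K * D_mu E w mu * (D_w E w + 1) / 2)
              + n * D_mu E w mu * (1 + D_w E w) / R"
proof -
  interpret wgraph E w mu by (rule wgraph.intro[OF graph])
  obtain a b where "E a b" using has_edge by blast
  interpret li_yau_setting E w mu x0 R u u_t "D_mu E w mu" "D_w E w" n K
    using R_pos u_pos u_deriv heat deg_div_mu_le_D_mu[OF Dmu_fin] deg_div_w_le_D_w[OF Dw_fin]
      one_le_D_w[OF Dw_fin \<open>E a b\<close>] n_pos K_pos CDE
    by unfold_locales auto
  have "li_yau x t \<le> n / (2 * t) + sqrt (n * K * D_mu E w mu * (D_w E w + 1) / 2)
      + n * D_mu E w mu * (1 + D_w E w) / R" if x: "x \<in> gball E x0 R" and t: "t > 0" for x t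
  proof (cases "n * (1 + D_w E w) < 1")
    case True
    then show ?thesis
      using D_mu_le_sqrt_of_CDE[OF CDE n_pos _ Dmu_fin one_le_W] K_pos t
      by (intro li_yau_le_of_D_le) auto
  qed (use li_yau_le_of_max_principle x t in simp)
  moreover have "gball E x0 R \<subseteq> gball E x0 (2 * R)" using R_pos unfolding gball_def by auto
  ultimately show ?thesis using li_yau_eq by auto
qed

end
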